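(* Let $G=(V,P,d)$ be a reversible metric Markov chain, $f\in\mathbb R^V$, and $\phi:I\to\mathbb R$ a concave, three times differentiable function on an open interval $I$ containing $f(V)$. Let $x\in V$ and assume $\phi'''(s)\ge0$ whenever $\min_{y\sim x}f(y)<s<f(x)$. Then \[ \Delta(\phi\circ f)(x)\le\phi'(f(x))\,\Delta f(x)+\frac{P_0}{2}\,\phi''(f(x))\,(\nabla_-f(x))^2 . \]
   Context: $V$ finite; $P:V\times V\to[0,\infty)$ with symmetric support; $x\sim y$ iff $x\neq y$ and $P(x,y)>0$; $d$ is a path distance ($d(x,y)=\inf$ of $\sum d(x_{k-1},x_k)$ over paths $x=x_0\sim\dots\sim x_n=y$), finite; there is a probability $m$ with $m(x)P(x,y)=m(y)P(y,x)$. $\Delta f(x)=\sum_yP(x,y)(f(y)-f(x))$. $P_0=\inf_{x\sim y}P(x,y)d(x,y)^2$. $\nabla_-f(x)=\max_{y\sim x}\frac{(f(y)-f(x))_-}{d(x,y)}$, where $s_-=\max(-s,0)$. *)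

theory Defs
  imports "HOL-Analysis.Analysis"
begin

definition adj :: "('a \<Rightarrow> 'a \<Rightarrow> real) \<Rightarrow> 'a \<Rightarrow> 'a \<Rightarrow> bool" where
  "adj P x y \<longleftrightarrow> x \<noteq> y \<and> P x y > 0"

definition walk :: "('a \<Rightarrow> 'a \<Rightarrow> real) \<Rightarrow> 'a \<Rightarrow> 'a \<Rightarrow> 'a list \<Rightarrow> bool" where
  "walk P x y xs \<longleftrightarrow> xs \<noteq> [] \<and> hd xs = x \<and> last xs = y \<and>
     (\<forall>i. Suc i < length xs \<longrightarrow> adj P (xs ! i) (xs ! Suc i))"

definition walk_length :: "('a \<Rightarrow> 'a \<Rightarrow> real) \<Rightarrow> 'a list \<Rightarrow> real" where
  "walk_length d xs = (\<Sum>i<length xs - 1. d (xs ! i) (xs ! Suc i))"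

text \<open>Reversible metric Markov chain (V,P,d) with V = UNIV :: 'a set finite.\<close>
definition rev_metric_markov_chain ::
  "('a::finite \<Rightarrow> 'a \<Rightarrow> real) \<Rightarrow> ('a \<Rightarrow> 'a \<Rightarrow> real) \<Rightarrow> bool" where
  "rev_metric_markov_chain P d \<longleftrightarrow>
     (\<forall>x y. P x y \<ge> 0) \<and>
     (\<forall>x y. P x y > 0 \<longleftrightarrow> P y x > 0) \<and>
     (\<forall>x y. d x y = d y x) \<and>
     (\<forall>x y. x \<noteq> y \<longrightarrow> d x y > 0) \<and>
     (\<forall>x y. {xs. walk P x y xs} \<noteq> {} \<and>
            d x y = Inf (walk_length d ` {xs. walk P x y xs})) \<and>
     (\<exists>m::'a \<Rightarrow> real. (\<forall>x. m x \<ge> 0) \<and> (\<Sum>x\<in>UNIV. m x) = 1 \<and>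
        (\<forall>x y. m x * P x y = m y * P y x))"

definition laplacian :: "('a::finite \<Rightarrow> 'a \<Rightarrow> real) \<Rightarrow> ('a \<Rightarrow> real) \<Rightarrow> 'a \<Rightarrow> real" where
  "laplacian P f x = (\<Sum>y\<in>UNIV. P x y * (f y - f x))"

definition P0 :: "('a \<Rightarrow> 'a \<Rightarrow> real) \<Rightarrow> ('a \<Rightarrow> 'a \<Rightarrow> real) \<Rightarrow> real" where
  "P0 P d = Inf {P x y * (d x y)\<^sup>2 | x y. adj P x y}"

definition neg_part :: "real \<Rightarrow> real" where
  "neg_part s = max (- s) 0"

text \<open>Max over neighbours; with no neighbours the value is 0 (all terms are \<ge> 0).\<close>
definition grad_minus ::
  "('a::finite \<Rightarrow> 'a \<Rightarrow> real) \<Rightarrow> ('a \<Rightarrow> 'a \<Rightarrow> real) \<Rightarrow> ('a \<Rightarrow> real) \<Rightarrow> 'a \<Rightarrow> real" where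
  "grad_minus P d f x =
     Max (insert 0 {neg_part (f y - f x) / d x y | y. adj P x y})"

end

theory Submission
  imports Defs
begin

text \<open>Expand each term \<open>\<phi>(f y) - \<phi>(f x)\<close> around \<open>f x\<close>. Upwards (\<open>f y \<ge> f x\<close>) the tangent
  line of the concave \<open>\<phi>\<close> already bounds it. Downwards, Taylor's formula to second order has
  a remainder \<open>\<phi>'''(t) (f y - f x)\<^sup>3 / 6 \<le> 0\<close>, because \<open>f y < t < f x\<close> and \<open>\<phi>''' \<ge> 0\<close> there.
  Summing with weights \<open>P(x,y)\<close> leaves the term \<open>\<phi>''(f x)/2 \<cdot> \<Sum>\<^sub>y P(x,y) (f y - f x)\<^sub>-\<^sup>2\<close>, and since
  \<open>\<phi>'' \<le> 0\<close> it suffices to bound that sum from below by its largest summand, which is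
  at least \<open>P\<^sub>0 (\<nabla>\<^sub>-f(x))\<^sup>2\<close>.\<close>

lemma concave_on_le_tangent:
  fixes \<phi> \<phi>1 :: "real \<Rightarrow> real"
  assumes "open I" "is_interval I" "concave_on I \<phi>"
    and d1: "\<forall>s\<in>I. (\<phi> has_real_derivative \<phi>1 s) (at s)"
    and "c \<in> I" "s \<in> I"
  shows "\<phi> s - \<phi> c \<le> \<phi>1 c * (s - c)"
proof -
  have "convex_on I (\<lambda>t. - \<phi> t)"
    using assms(3) by (simp add: concave_on_def)
  moreover have "((\<lambda>t. - \<phi> t) has_field_derivative - \<phi>1 c) (at c within I)"
    using d1 \<open>c \<in> I\<close> by (auto intro: has_field_derivative_at_within DERIV_minus)
  ultimately have "- \<phi> s - - \<phi> c \<ge> - \<phi>1 c * (s - c)"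
    using assms(1,2,5,6)
    by (intro convex_on_imp_above_tangent) (auto simp: interior_open is_interval_connected)
  then show ?thesis by simp
qed

lemma concave_on_second_deriv_nonpos:
  fixes \<phi> \<phi>1 \<phi>2 :: "real \<Rightarrow> real"
  assumes I: "open I" "is_interval I" "concave_on I \<phi>"
    and d1: "\<forall>s\<in>I. (\<phi> has_real_derivative \<phi>1 s) (at s)"
    and d2: "\<forall>s\<in>I. (\<phi>1 has_real_derivative \<phi>2 s) (at s)"
    and c: "c \<in> I"
  shows "\<phi>2 c \<le> 0"
proof (rule ccontr)
  assume "\<not> \<phi>2 c \<le> 0"
  then obtain r where r: "r > 0" "\<forall>h>0. h < r \<longrightarrow> \<phi>1 c < \<phi>1 (c + h)"
    using DERIV_pos_inc_right d2 c by (metis not_le)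
  obtain e where e: "e > 0" "ball c e \<subseteq> I"
    using I(1) c by (meson openE)
  define h where "h = min r e / 2"
  have h: "h > 0" "h < r" "h < e"
    using r e by (auto simp: h_def)
  have ch: "c + h \<in> I"
    using e h by (auto simp: dist_norm intro!: subsetD[OF e(2)])
  have "\<phi> (c + h) - \<phi> c \<le> \<phi>1 c * h"
    using concave_on_le_tangent[OF I d1 c ch] by simp
  moreover have "\<phi> c - \<phi> (c + h) \<le> \<phi>1 (c + h) * (- h)"
    using concave_on_le_tangent[OF I d1 ch c] by simp
  ultimately have "\<phi>1 (c + h) * h \<le> \<phi>1 c * h"
    by linarith
  then have "\<phi>1 (c + h) \<le> \<phi>1 c"
    using h(1) by simp
  then show False
    using r h by force
qed

lemma taylor2_upper_bound_third_deriv_nonneg: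
  fixes \<phi> \<phi>1 \<phi>2 \<phi>3 :: "real \<Rightarrow> real"
  assumes "a < b"
    and d1: "\<forall>t\<in>{a..b}. (\<phi> has_real_derivative \<phi>1 t) (at t)"
    and d2: "\<forall>t\<in>{a..b}. (\<phi>1 has_real_derivative \<phi>2 t) (at t)"
    and d3: "\<forall>t\<in>{a..b}. (\<phi>2 has_real_derivative \<phi>3 t) (at t)"
    and third: "\<forall>t\<in>{a<..<b}. \<phi>3 t \<ge> 0"
  shows "\<phi> a - \<phi> b \<le> \<phi>1 b * (a - b) + \<phi>2 b / 2 * (a - b)\<^sup>2"
proof -
  define D where "D m = [\<phi>, \<phi>1, \<phi>2, \<phi>3] ! m" for m
  have "\<exists>t. (if a < b then a < t \<and> t < b else b < t \<and> t < a) \<and>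
      \<phi> a = (\<Sum>m<3. D m b / fact m * (a - b) ^ m) + D 3 t / fact 3 * (a - b) ^ 3"
  proof (rule Taylor)
    show "\<forall>m t. m < 3 \<and> a \<le> t \<and> t \<le> b \<longrightarrow> (D m has_real_derivative D (Suc m) t) (at t)"
    proof (intro allI impI)
      fix m :: nat and t assume "m < 3 \<and> a \<le> t \<and> t \<le> b"
      then consider "m = 0" | "m = 1" | "m = 2"
        by force
      then show "(D m has_real_derivative D (Suc m) t) (at t)"
        using d1 d2 d3 \<open>m < 3 \<and> a \<le> t \<and> t \<le> b\<close> by cases (auto simp: D_def)
    qed
  qed (use \<open>a < b\<close> in \<open>simp_all add: D_def\<close>)
  then obtain t where t: "a < t" "t < b"
    and taylor: "\<phi> a = \<phi> b + \<phi>1 b * (a - b) + \<phi>2 b / 2 * (a - b)\<^sup>2 + \<phi>3 t / 6 * (a - b) ^ 3"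
    using \<open>a < b\<close>
    by (auto simp: D_def numeral_3_eq_3 lessThan_Suc fact_numeral eval_nat_numeral)
  have "\<phi>3 t / 6 * (a - b) ^ 3 \<le> 0"
    using third t \<open>a < b\<close> by (intro mult_nonneg_nonpos) (auto simp: power_le_zero_eq)
  then show ?thesis
    using taylor by linarith
qed

lemma concave_second_order_upper_bound:
  fixes \<phi> \<phi>1 \<phi>2 \<phi>3 :: "real \<Rightarrow> real"
  assumes I: "open I" "is_interval I" "concave_on I \<phi>"
    and d1: "\<forall>s\<in>I. (\<phi> has_real_derivative \<phi>1 s) (at s)"
    and d2: "\<forall>s\<in>I. (\<phi>1 has_real_derivative \<phi>2 s) (at s)"
    and d3: "\<forall>s\<in>I. (\<phi>2 has_real_derivative \<phi>3 s) (at s)"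
    and "c \<in> I" "s \<in> I"
    and third: "s < c \<Longrightarrow> \<forall>t\<in>{s<..<c}. \<phi>3 t \<ge> 0"
  shows "\<phi> s - \<phi> c \<le> \<phi>1 c * (s - c) + \<phi>2 c / 2 * (neg_part (s - c))\<^sup>2"
proof (cases "s < c")
  case True
  have "{s..c} \<subseteq> I"
    using mem_is_interval_1_I[OF I(2) \<open>s \<in> I\<close> \<open>c \<in> I\<close>] by auto
  then have "\<phi> s - \<phi> c \<le> \<phi>1 c * (s - c) + \<phi>2 c / 2 * (s - c)\<^sup>2"
    using d1 d2 d3 third[OF True] True
    by (intro taylor2_upper_bound_third_deriv_nonneg) (auto simp: subset_iff)
  then show ?thesis
    using True by (simp add: neg_part_def power2_commute)
next
  case False
  then show ?thesis
    using concave_on_le_tangent[OF I d1 \<open>c \<in> I\<close> \<open>s \<in> I\<close>] by (simp add: neg_part_def)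
qed

lemma laplacian_comp_le_second_order:
  fixes P :: "'a::finite \<Rightarrow> 'a \<Rightarrow> real"
  assumes P_nonneg: "\<And>y. P x y \<ge> 0"
    and bound: "\<And>y. adj P x y \<Longrightarrow>
      \<phi> (f y) - \<phi> (f x) \<le> \<phi>1 (f x) * (f y - f x) + \<phi>2 (f x) / 2 * (neg_part (f y - f x))\<^sup>2"
  shows "laplacian P (\<phi> \<circ> f) x
    \<le> \<phi>1 (f x) * laplacian P f x + \<phi>2 (f x) / 2 * (\<Sum>y\<in>UNIV. P x y * (neg_part (f y - f x))\<^sup>2)"
proof -
  have "P x y * (\<phi> (f y) - \<phi> (f x))
      \<le> P x y * (\<phi>1 (f x) * (f y - f x) + \<phi>2 (f x) / 2 * (neg_part (f y - f x))\<^sup>2)" for y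
  proof (cases "adj P x y")
    case True
    then show ?thesis
      using P_nonneg bound by (intro mult_left_mono)
  next
    case False
    then have "P x y = 0 \<or> y = x"
      using P_nonneg[of y] by (auto simp: adj_def)
    then show ?thesis
      by (auto simp: neg_part_def)
  qed
  then have "laplacian P (\<phi> \<circ> f) x
      \<le> (\<Sum>y\<in>UNIV. P x y * (\<phi>1 (f x) * (f y - f x) + \<phi>2 (f x) / 2 * (neg_part (f y - f x))\<^sup>2))"
    unfolding laplacian_def o_def by (rule sum_mono)
  also have "\<dots>
      = \<phi>1 (f x) * laplacian P f x + \<phi>2 (f x) / 2 * (\<Sum>y\<in>UNIV. P x y * (neg_part (f y - f x))\<^sup>2)"
    by (simp add: laplacian_def distrib_left sum.distrib sum_distrib_left mult_ac)
  finally show ?thesis .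
qed

lemma P0_le_adj:
  fixes P d :: "'a::finite \<Rightarrow> 'a \<Rightarrow> real"
  assumes "adj P x y"
  shows "P0 P d \<le> P x y * (d x y)\<^sup>2"
proof -
  have "finite {P a b * (d a b)\<^sup>2 | a b. adj P a b}"
    by (rule finite_subset[of _ "(\<lambda>(a, b). P a b * (d a b)\<^sup>2) ` UNIV"]) auto
  then have "bdd_below {P a b * (d a b)\<^sup>2 | a b. adj P a b}"
    by (rule bdd_below_finite)
  then show ?thesis
    unfolding P0_def using assms by (intro cInf_lower) auto
qed

lemma P0_grad_minus_sq_le:
  fixes P d :: "'a::finite \<Rightarrow> 'a \<Rightarrow> real"
  assumes P_nonneg: "\<And>a b. P a b \<ge> 0"
    and d_pos: "\<And>y. adj P x y \<Longrightarrow> d x y > 0"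
  shows "P0 P d * (grad_minus P d f x)\<^sup>2 \<le> (\<Sum>y\<in>UNIV. P x y * (neg_part (f y - f x))\<^sup>2)"
proof -
  let ?S = "{neg_part (f y - f x) / d x y | y. adj P x y}"
  have summands_nonneg: "\<And>y. 0 \<le> P x y * (neg_part (f y - f x))\<^sup>2"
    using P_nonneg by simp
  have "finite ?S"
    by (rule finite_subset[of _ "range (\<lambda>y. neg_part (f y - f x) / d x y)"]) auto
  then have "grad_minus P d f x \<in> insert 0 ?S"
    unfolding grad_minus_def by (intro Max_in) auto
  then consider "grad_minus P d f x = 0"
    | y where "adj P x y" "grad_minus P d f x = neg_part (f y - f x) / d x y"
    by blast
  then show ?thesis
  proof cases
    case 1
    then show ?thesis
      using summands_nonneg by (simp add: sum_nonneg)
  next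
    case (2 y)
    have "P0 P d * (grad_minus P d f x)\<^sup>2 \<le> P x y * (d x y)\<^sup>2 * (grad_minus P d f x)\<^sup>2"
      using P0_le_adj[OF \<open>adj P x y\<close>] by (rule mult_right_mono) simp
    also have "\<dots> = P x y * (neg_part (f y - f x))\<^sup>2"
      using 2 d_pos[of y] by (simp add: power_divide)
    also have "\<dots> \<le> (\<Sum>y\<in>UNIV. P x y * (neg_part (f y - f x))\<^sup>2)"
      using summands_nonneg by (intro member_le_sum) auto
    finally show ?thesis .
  qed
qed

theorem lemma5p2:
  fixes P d :: "'a::finite \<Rightarrow> 'a \<Rightarrow> real"
    and f :: "'a \<Rightarrow> real"
    and \<phi> \<phi>1 \<phi>2 \<phi>3 :: "real \<Rightarrow> real"
    and I :: "real set" and x :: 'a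
  assumes G: "rev_metric_markov_chain P d"
    and I: "open I" "is_interval I" "range f \<subseteq> I"
    and conc: "concave_on I \<phi>"
    and d1: "\<forall>s\<in>I. (\<phi> has_real_derivative \<phi>1 s) (at s)"
    and d2: "\<forall>s\<in>I. (\<phi>1 has_real_derivative \<phi>2 s) (at s)"
    and d3: "\<forall>s\<in>I. (\<phi>2 has_real_derivative \<phi>3 s) (at s)"
    and third: "\<forall>s. (\<exists>y. adj P x y \<and> f y < s) \<and> s < f x \<longrightarrow> \<phi>3 s \<ge> 0"
  shows "laplacian P (\<phi> \<circ> f) x
    \<le> \<phi>1 (f x) * laplacian P f x + P0 P d / 2 * \<phi>2 (f x) * (grad_minus P d f x)\<^sup>2"
proof -
  have P_nonneg: "\<And>a b. P a b \<ge> 0" and d_pos: "\<And>a b. a \<noteq> b \<Longrightarrow> d a b > 0"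
    using G by (auto simp: rev_metric_markov_chain_def)
  have fI: "\<And>y. f y \<in> I"
    using I(3) by auto
  let ?N = "\<Sum>y\<in>UNIV. P x y * (neg_part (f y - f x))\<^sup>2"
  have "adj P x y \<Longrightarrow> f y < f x \<Longrightarrow> \<forall>t\<in>{f y<..<f x}. \<phi>3 t \<ge> 0" for y
    using third by fastforce
  then have "laplacian P (\<phi> \<circ> f) x \<le> \<phi>1 (f x) * laplacian P f x + \<phi>2 (f x) / 2 * ?N"
    using P_nonneg
    by (intro laplacian_comp_le_second_order
        concave_second_order_upper_bound[OF I(1,2) conc d1 d2 d3 fI fI])
  also have "\<phi>2 (f x) / 2 * ?N \<le> \<phi>2 (f x) / 2 * (P0 P d * (grad_minus P d f x)\<^sup>2)"
  proof (rule mult_left_mono_neg)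
    show "P0 P d * (grad_minus P d f x)\<^sup>2 \<le> ?N"
      using P_nonneg d_pos by (intro P0_grad_minus_sq_le) (auto simp: adj_def)
    show "\<phi>2 (f x) / 2 \<le> 0"
      using concave_on_second_deriv_nonpos[OF I(1,2) conc d1 d2 fI] by simp
  qed
  finally show ?thesis
    by (simp add: mult_ac)
qed

end
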